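(* Let $\epsilon\ge0$ and fix any ordering $e_1,\dots,e_n$ of $V$. Let $S$ be the output of the algorithm that starts with $S=\emptyset$ and, for $i=1,\dots,n$, adds $e_i$ to $S$ if $|S|<k$ and $f(e_i\mid S)\ge\frac{1+\epsilon}{2}\cdot\frac{\mathrm{OPT}}{k}$. Let $\mathcal O$ be a set with $|\mathcal O|\le k$ and $f(\mathcal O)=\mathrm{OPT}$. If $|S\cap\mathcal O|\ge2\epsilon k$, then $f(S)\ge\frac{1+\epsilon}{2}\mathrm{OPT}$.
   Context: $V$ is a finite ground set with $|V|=n$; $f:2^V\to\mathbb{R}_{\ge0}$ is monotone, submodular and normalized; $f(e\mid Y)=f(Y\cup\{e\})-f(Y)$. $k$ is a positive integer and $\mathrm{OPT}=\max\{f(S):S\subseteq V,|S|\le k\}$ (known to the algorithm). *)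

theory Defs
  imports Complex_Main
begin

definition marginal :: "('a set \<Rightarrow> real) \<Rightarrow> 'a \<Rightarrow> 'a set \<Rightarrow> real" where
  "marginal f e Y = f (Y \<union> {e}) - f Y"

definition monotone_set_fun :: "'a set \<Rightarrow> ('a set \<Rightarrow> real) \<Rightarrow> bool" where
  "monotone_set_fun V f \<longleftrightarrow> (\<forall>A B. A \<subseteq> B \<and> B \<subseteq> V \<longrightarrow> f A \<le> f B)"

definition submodular :: "'a set \<Rightarrow> ('a set \<Rightarrow> real) \<Rightarrow> bool" where
  "submodular V f \<longleftrightarrow> (\<forall>A B. A \<subseteq> V \<and> B \<subseteq> V \<longrightarrow> f (A \<union> B) + f (A \<inter> B) \<le> f A + f B)"

definition normalized :: "('a set \<Rightarrow> real) \<Rightarrow> bool" where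
  "normalized f \<longleftrightarrow> f {} = 0"

definition nonneg_set_fun :: "'a set \<Rightarrow> ('a set \<Rightarrow> real) \<Rightarrow> bool" where
  "nonneg_set_fun V f \<longleftrightarrow> (\<forall>A. A \<subseteq> V \<longrightarrow> 0 \<le> f A)"

definition OPT :: "'a set \<Rightarrow> ('a set \<Rightarrow> real) \<Rightarrow> nat \<Rightarrow> real" where
  "OPT V f k = Max (f ` {S. S \<subseteq> V \<and> card S \<le> k})"

definition thr_step :: "('a set \<Rightarrow> real) \<Rightarrow> nat \<Rightarrow> real \<Rightarrow> 'a set \<Rightarrow> 'a \<Rightarrow> 'a set" where
  "thr_step f k tau S e = (if card S < k \<and> marginal f e S \<ge> tau then S \<union> {e} else S)"

definition threshold_alg :: "('a set \<Rightarrow> real) \<Rightarrow> nat \<Rightarrow> real \<Rightarrow> 'a list \<Rightarrow> 'a set" where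
  "threshold_alg f k tau es = foldl (thr_step f k tau) {} es"

end

theory Submission
  imports Defs
begin

text \<open>If the threshold algorithm fills all k slots, every accepted element gained at least
  the threshold \<open>\<tau> = (1 + \<epsilon>)/2 \<cdot> OPT/k\<close>, so \<open>f(S) \<ge> k\<tau>\<close>. Otherwise every element of
  \<open>\<O> - S\<close> was rejected with marginal gain below \<open>\<tau>\<close> at the time, hence (by submodularity)
  also relative to the final \<open>S\<close>; so \<open>OPT \<le> f(S) + |\<O> - S| \<tau> \<le> f(S) + (1 - 2\<epsilon>) k \<tau>\<close>,
  which gives \<open>f(S) \<ge> (1 + \<epsilon> + 2\<epsilon>\<^sup>2)/2 \<cdot> OPT\<close>.\<close>

lemma marginal_antimono:
  assumes "monotone_set_fun V f" "submodular V f" "A \<subseteq> B" "B \<subseteq> V" "e \<in> V"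
  shows "marginal f e B \<le> marginal f e A"
proof (cases "e \<in> B")
  case True
  have "A \<union> {e} \<subseteq> V" using assms(3-5) by auto
  then have "f A \<le> f (A \<union> {e})"
    using assms(1) unfolding monotone_set_fun_def by (meson sup_ge1)
  with True show ?thesis unfolding marginal_def by (simp add: insert_absorb)
next
  case False
  have "A \<union> {e} \<subseteq> V" using assms(3-5) by auto
  then have "f ((A \<union> {e}) \<union> B) + f ((A \<union> {e}) \<inter> B) \<le> f (A \<union> {e}) + f B"
    using assms(2,4) unfolding submodular_def by (simp del: Un_insert_left Un_insert_right)
  moreover have "(A \<union> {e}) \<union> B = B \<union> {e}" "(A \<union> {e}) \<inter> B = A"
    using False assms(3) by auto
  ultimately show ?thesis unfolding marginal_def by simp
qed

lemma submodular_union_le_sum_marginal: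
  assumes "monotone_set_fun V f" "submodular V f" "S \<subseteq> V" "finite X" "X \<subseteq> V"
  shows "f (S \<union> X) \<le> f S + (\<Sum>e\<in>X. marginal f e S)"
  using assms(4,5)
proof (induction X rule: finite_induct)
  case empty
  then show ?case by simp
next
  case (insert x X)
  have "f (S \<union> insert x X) = f (S \<union> X) + marginal f x (S \<union> X)"
    unfolding marginal_def by (simp add: insert_commute)
  moreover have "marginal f x (S \<union> X) \<le> marginal f x S"
    using marginal_antimono[OF assms(1,2)] insert.prems assms(3) by auto
  ultimately show ?case using insert by simp
qed

lemma foldl_thr_step_bounds:
  "T \<subseteq> foldl (thr_step f k \<tau>) T xs \<and> foldl (thr_step f k \<tau>) T xs \<subseteq> T \<union> set xs"
proof (induction xs arbitrary: T)
  case Nil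
  then show ?case by simp
next
  case (Cons x xs)
  have "T \<subseteq> thr_step f k \<tau> T x" "thr_step f k \<tau> T x \<subseteq> T \<union> {x}"
    by (auto simp: thr_step_def)
  then show ?case using Cons.IH[of "thr_step f k \<tau> T x"] by auto
qed

lemma card_foldl_thr_step_le:
  assumes "finite T" "card T \<le> k"
  shows "card (foldl (thr_step f k \<tau>) T xs) \<le> k"
  using assms by (induction xs arbitrary: T) (auto simp: thr_step_def card_insert_if)

lemma foldl_thr_step_gain:
  assumes "finite T"
  shows "f (foldl (thr_step f k \<tau>) T xs)
           \<ge> f T + \<tau> * (real (card (foldl (thr_step f k \<tau>) T xs)) - real (card T))"
  using assms
proof (induction xs arbitrary: T)
  case Nil
  then show ?case by simp
next
  case (Cons x xs)
  define T' where "T' = thr_step f k \<tau> T x"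
  have "finite T'" using Cons.prems by (simp add: T'_def thr_step_def)
  have step: "f T' \<ge> f T + \<tau> * (real (card T') - real (card T))"
  proof (cases "card T < k \<and> marginal f x T \<ge> \<tau> \<and> x \<notin> T")
    case True
    then have "T' = insert x T" "card T' = card T + 1"
      using Cons.prems by (auto simp: T'_def thr_step_def)
    with True show ?thesis unfolding marginal_def by simp
  next
    case False
    then have "T' = T" by (auto simp: T'_def thr_step_def)
    then show ?thesis by simp
  qed
  show ?case
    using Cons.IH[OF \<open>finite T'\<close>] step by (simp add: T'_def algebra_simps)
qed

lemma foldl_thr_step_rejected:
  assumes "monotone_set_fun V f" "submodular V f" "T \<subseteq> V" "set xs \<subseteq> V" "finite V"
    and "card (foldl (thr_step f k \<tau>) T xs) < k" "e \<in> set xs" "e \<notin> foldl (thr_step f k \<tau>) T xs"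
  shows "marginal f e (foldl (thr_step f k \<tau>) T xs) < \<tau>"
  using assms(3,4,6-)
proof (induction xs arbitrary: T)
  case Nil
  then show ?case by simp
next
  case (Cons x xs)
  define T' where "T' = thr_step f k \<tau> T x"
  define R where "R = foldl (thr_step f k \<tau>) T' xs"
  have "T \<subseteq> T'" "T' \<subseteq> V" using Cons.prems by (auto simp: T'_def thr_step_def)
  have "T' \<subseteq> R" "R \<subseteq> V"
    using foldl_thr_step_bounds[of T' f k \<tau> xs] \<open>T' \<subseteq> V\<close> Cons.prems by (auto simp: R_def)
  have "card R < k" "e \<notin> R" using Cons.prems by (simp_all add: R_def T'_def)
  show ?case
  proof (cases "e = x")
    case True
    have "card T \<le> card R"
      using \<open>T \<subseteq> T'\<close> \<open>T' \<subseteq> R\<close> \<open>R \<subseteq> V\<close> assms(5) by (meson card_mono finite_subset order_trans)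
    with True \<open>card R < k\<close> \<open>e \<notin> R\<close> \<open>T' \<subseteq> R\<close> have "marginal f x T < \<tau>"
      by (auto simp: T'_def thr_step_def split: if_splits)
    moreover have "marginal f x R \<le> marginal f x T"
      using marginal_antimono[OF assms(1,2)] \<open>T \<subseteq> T'\<close> \<open>T' \<subseteq> R\<close> \<open>R \<subseteq> V\<close> Cons.prems by auto
    ultimately show ?thesis using True by (simp add: R_def T'_def)
  next
    case False
    then show ?thesis using Cons.IH[OF \<open>T' \<subseteq> V\<close>] Cons.prems by (simp add: T'_def)
  qed
qed

lemma threshold_alg_unfilled_bound:
  assumes "finite V" "monotone_set_fun V f" "submodular V f" "set es = V" "X \<subseteq> V"
    and "card (threshold_alg f k \<tau> es) < k"
  shows "f X \<le> f (threshold_alg f k \<tau> es) + real (card (X - threshold_alg f k \<tau> es)) * \<tau>"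
proof -
  define S where "S = threshold_alg f k \<tau> es"
  have "S \<subseteq> V"
    using foldl_thr_step_bounds[of "{}" f k \<tau> es] assms(4) by (simp add: S_def threshold_alg_def)
  have "finite X" using assms(1,5) finite_subset by blast
  have "f X \<le> f (S \<union> (X - S))"
    using assms(2,5) \<open>S \<subseteq> V\<close> unfolding monotone_set_fun_def by auto
  also have "\<dots> \<le> f S + (\<Sum>e\<in>X - S. marginal f e S)"
    by (rule submodular_union_le_sum_marginal[OF assms(2,3) \<open>S \<subseteq> V\<close>])
      (use \<open>finite X\<close> assms(5) in auto)
  also have "(\<Sum>e\<in>X - S. marginal f e S) \<le> (\<Sum>e\<in>X - S. \<tau>)"
  proof (rule sum_mono)
    fix e assume "e \<in> X - S"
    then show "marginal f e S \<le> \<tau>"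
      using foldl_thr_step_rejected[OF assms(2,3), of "{}" es] assms(1,4-6)
      by (fastforce simp: S_def threshold_alg_def)
  qed
  finally show ?thesis by (simp add: S_def)
qed

theorem mainTheorem12:
  fixes V :: "'a set" and f :: "'a set \<Rightarrow> real" and k :: nat and \<epsilon> :: real
    and es :: "'a list" and Opt :: "'a set"
  assumes "finite V"
    and "nonneg_set_fun V f" and "monotone_set_fun V f" and "submodular V f" and "normalized f"
    and "k > 0"
    and "\<epsilon> \<ge> 0"
    and "distinct es" and "set es = V"
    and "Opt \<subseteq> V" and "card Opt \<le> k" and "f Opt = OPT V f k"
    and "real (card (threshold_alg f k ((1 + \<epsilon>) / 2 * (OPT V f k / k)) es \<inter> Opt)) \<ge> 2 * \<epsilon> * k"
  shows "f (threshold_alg f k ((1 + \<epsilon>) / 2 * (OPT V f k / k)) es) \<ge> (1 + \<epsilon>) / 2 * OPT V f k"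
proof -
  define M where "M = OPT V f k"
  define \<tau> where "\<tau> = (1 + \<epsilon>) / 2 * (M / k)"
  define S where "S = threshold_alg f k \<tau> es"
  have "M \<ge> 0" using assms(2,10,12) unfolding nonneg_set_fun_def M_def by metis
  have k\<tau>: "real k * \<tau> = (1 + \<epsilon>) / 2 * M" using assms(6) by (simp add: \<tau>_def)
  have "f S \<ge> \<tau> * real (card S)"
    using foldl_thr_step_gain[where T="{}" and f=f and k=k and xs=es] assms(5)
    by (simp add: S_def threshold_alg_def normalized_def)
  moreover have "card S \<le> k"
    using card_foldl_thr_step_le[of "{}"] by (simp add: S_def threshold_alg_def)
  moreover have "f S \<ge> (1 + \<epsilon>) / 2 * M" if "card S < k"
  proof -
    have "finite Opt" using assms(1,10) finite_subset by blast
    then have "card (Opt - S) + card (S \<inter> Opt) = card Opt"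
      using card_Diff_subset_Int[of Opt S] card_mono[of Opt "Opt \<inter> S"] by (simp add: Int_commute)
    then have "real (card (Opt - S)) * \<tau> \<le> (real k - 2 * \<epsilon> * k) * \<tau>"
      using assms(7,11,13) \<open>M \<ge> 0\<close> by (intro mult_right_mono) (simp_all add: S_def \<tau>_def M_def)
    moreover have "M \<le> f S + real (card (Opt - S)) * \<tau>"
      using threshold_alg_unfilled_bound[OF assms(1,3,4,9,10)] that assms(12) by (simp add: S_def M_def)
    moreover have "(real k - 2 * \<epsilon> * k) * \<tau> = (1 - 2 * \<epsilon>) * (real k * \<tau>)"
      by (simp add: algebra_simps)
    then have "(real k - 2 * \<epsilon> * k) * \<tau> = M - \<epsilon>\<^sup>2 * M - (1 + \<epsilon>) / 2 * M"
      unfolding k\<tau> by (simp add: field_simps power2_eq_square)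
    moreover have "\<epsilon>\<^sup>2 * M \<ge> 0" using \<open>M \<ge> 0\<close> by simp
    ultimately show ?thesis by linarith
  qed
  ultimately show ?thesis
    using k\<tau> by (cases "card S = k") (auto simp: S_def \<tau>_def M_def mult.commute)
qed

end
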